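(* Let $S$ be a Stone relation algebra and $\# : S\to\mathbb{N}\cup\{\infty\}$ a function. Consider the properties: (C1a) $\#\bot=0$; (C1b) $\forall x:\ \#x=0\iff x=\bot$; (C3) $\forall x:\ \#(x^{\smile})=\#x$; (C4a) $\forall x,y:\ \#x+\#y=\#(x\sqcup y)+\#(x\sqcap y)$; (C4b) $\forall x,y:\ x\sqsubseteq y\implies \#x\le\#y$; (C5a) $\forall x,y,z$ with $x$ univalent: $\#(x^{\smile}y\sqcap z)\le\#(xz\sqcap y)$; (C5b) $\forall x,y,z$ with $x$ univalent: $\#(x\sqcap yz^{\smile})\le\#(xz\sqcap y)$; (C5c) $\forall x,y$ with $x$ univalent: $\#(yx)\le\#y$; (C5d) $\forall x,y$ with $x$ univalent: $\#(x\sqcap y\top)\le\#y$; (C5e) $\forall x,y$ with $x$ univalent: $\#(x\sqcap yy^{\smile})\le\#y$; (C6a) $\forall x:\ \#(1\sqcap xx^{\smile})\le\#x$; (C6b) $\forall x:\ \#(1\sqcap x^{\smile}x)\le\#x$; (C7a) $\forall x:\ \#x=\#\top\iff x=\top$; (C7b) $\forall x:\ \#\top\le\#x\iff x=\top$. Then: 1. (C1b) implies (C1a). 2. (C3) and (C5c) together imply (C5a). 3. Each of (C5b) and (C5e) implies (C6a). 4. If (C3) holds, then (C6a) $\iff$ (C6b). 5. If (C3) and (C4b) hold, then (C5a) $\iff$ (C5c). 6. If (C4b) holds, then (C5b) $\iff$ (C5d), and (C5d) implies (C5e). 7. If (C4b) and (C5c) hold, then (C5b), (C5d), (C5e) and (C6a)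 are pairwise equivalent. 8. If (C4b) holds, then $\#x\le\#\top$ for every $x\in S$; in particular (C7a) $\iff$ (C7b). 9. If (C5b) and (C5c) hold, then $\#(xy)=\#x$ for every univalent $x$ and every mapping $y$. 10. If (C3), (C5b) and (C5c) hold, then $\#x=\#1$ for every point $x$. 11. If (C1a) and (C4a) hold, then $\#(x\sqcup y)=\#x+\#y$ whenever $x\sqcap y=\bot$. 12. If (C1a) and (C4a) hold and $X\subseteq S$ is finite and non-empty with $x\sqcap y=\bot$ for all distinct $x,y\in X$, then $\#\bigsqcup X=\sum_{x\in X}\#x$. 13. If (C1a) and (C4a) hold and $X\subseteq S$ is a finite non-empty set of atoms, then $\#\bigsqcup X=\sum_{x\in X}\#x$.
   Context: A Stone relation algebra is a structure $(S,\sqcup,\sqcap,\cdot,\overline{\,\cdot\,},{}^{\smile},\bot,\top,1)$ (write $xy$ for $x\cdot y$, $\overline{x}$ for the pseudocomplement, $x^{\smile}$ for the converse) such that: $(S,\sqcup,\sqcap,\bot,\top)$ is a bounded distributive lattice with order $x\sqsubseteq y\iff x\sqcup y=y$; $x\sqcap y=\bot\iff x\sqsubseteq\overline{y}$; $\overline{x}\sqcup\overline{\overline{x}}=\top$; $\cdot$ is associative with two-sided unit $1$, distributes over $\sqcup$ on both sides, and $\bot$ is a zero of $\cdot$; $x^{\smile\smile}=x$, $(xy)^{\smile}=y^{\smile}x^{\smile}$, $(x\sqcup y)^{\smile}=x^{\smile}\sqcup y^{\smile}$; $\overline{\overline{1}}=1$; $\overline{\overline{xy}}=\overline{\overline{x}}\,\overline{\overline{y}}$;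 $xy\sqcap z\sqsubseteq x(y\sqcap x^{\smile}z)$. $\bigsqcup X$ denotes the join of a finite non-empty set $X$. $x$ is univalent if $x^{\smile}x\sqsubseteq1$, total if $1\sqsubseteq xx^{\smile}$, a mapping if univalent and total, injective if $xx^{\smile}\sqsubseteq1$, surjective if $1\sqsubseteq x^{\smile}x$, a vector if $x\top=x$, a point if it is an injective, surjective vector. An atom is an element $x\neq\bot$ such that $\bot\neq y\sqsubseteq x$ implies $y=x$. Arithmetic in $\mathbb{N}\cup\{\infty\}$ is the usual one with $n+\infty=\infty+n=\infty$, $n\le\infty$. *)

theory Defs
  imports Main "HOL-Library.Extended_Nat"
begin

class stone_relation_algebra = bounded_lattice + distrib_lattice + uminus + monoid_mult +
  fixes conv :: "'a \<Rightarrow> 'a"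
  assumes sra_pseudo_complement: "inf x y = bot \<longleftrightarrow> x \<le> - y"
    and sra_stone: "sup (- x) (-(-x)) = top"
    and sra_mult_sup_right: "x * sup y z = sup (x * y) (x * z)"
    and sra_mult_sup_left: "sup x y * z = sup (x * z) (y * z)"
    and sra_mult_bot_left: "bot * x = bot"
    and sra_mult_bot_right: "x * bot = bot"
    and sra_conv_invol: "conv (conv x) = x"
    and sra_conv_mult: "conv (x * y) = conv y * conv x"
    and sra_conv_sup: "conv (sup x y) = sup (conv x) (conv y)"
    and sra_pp_one: "-(-1) = 1"
    and sra_pp_mult: "-(-(x * y)) = (-(-x)) * (-(-y))"
    and sra_dedekind: "inf (x * y) z \<le> x * inf y (conv x * z)"

definition univalent :: "'a::stone_relation_algebra \<Rightarrow> bool" where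
  "univalent x \<longleftrightarrow> conv x * x \<le> 1"
definition total :: "'a::stone_relation_algebra \<Rightarrow> bool" where
  "total x \<longleftrightarrow> 1 \<le> x * conv x"
definition mapping :: "'a::stone_relation_algebra \<Rightarrow> bool" where
  "mapping x \<longleftrightarrow> univalent x \<and> total x"
definition injective :: "'a::stone_relation_algebra \<Rightarrow> bool" where
  "injective x \<longleftrightarrow> x * conv x \<le> 1"
definition surjective :: "'a::stone_relation_algebra \<Rightarrow> bool" where
  "surjective x \<longleftrightarrow> 1 \<le> conv x * x"
definition vector :: "'a::stone_relation_algebra \<Rightarrow> bool" where
  "vector x \<longleftrightarrow> x * top = x"
definition point :: "'a::stone_relation_algebra \<Rightarrow> bool" where
  "point x \<longleftrightarrow> injective x \<and> surjective x \<and> vector x"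
definition atom :: "'a::stone_relation_algebra \<Rightarrow> bool" where
  "atom x \<longleftrightarrow> x \<noteq> bot \<and> (\<forall>y. y \<noteq> bot \<and> y \<le> x \<longrightarrow> y = x)"

definition C1a :: "('a::stone_relation_algebra \<Rightarrow> enat) \<Rightarrow> bool" where
  "C1a cnt \<longleftrightarrow> cnt bot = 0"
definition C1b :: "('a::stone_relation_algebra \<Rightarrow> enat) \<Rightarrow> bool" where
  "C1b cnt \<longleftrightarrow> (\<forall>x. cnt x = 0 \<longleftrightarrow> x = bot)"
definition C3 :: "('a::stone_relation_algebra \<Rightarrow> enat) \<Rightarrow> bool" where
  "C3 cnt \<longleftrightarrow> (\<forall>x. cnt (conv x) = cnt x)"
definition C4a :: "('a::stone_relation_algebra \<Rightarrow> enat) \<Rightarrow> bool" where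
  "C4a cnt \<longleftrightarrow> (\<forall>x y. cnt x + cnt y = cnt (sup x y) + cnt (inf x y))"
definition C4b :: "('a::stone_relation_algebra \<Rightarrow> enat) \<Rightarrow> bool" where
  "C4b cnt \<longleftrightarrow> (\<forall>x y. x \<le> y \<longrightarrow> cnt x \<le> cnt y)"
definition C5a :: "('a::stone_relation_algebra \<Rightarrow> enat) \<Rightarrow> bool" where
  "C5a cnt \<longleftrightarrow> (\<forall>x y z. univalent x \<longrightarrow> cnt (inf (conv x * y) z) \<le> cnt (inf (x * z) y))"
definition C5b :: "('a::stone_relation_algebra \<Rightarrow> enat) \<Rightarrow> bool" where
  "C5b cnt \<longleftrightarrow> (\<forall>x y z. univalent x \<longrightarrow> cnt (inf x (y * conv z)) \<le> cnt (inf (x * z) y))"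
definition C5c :: "('a::stone_relation_algebra \<Rightarrow> enat) \<Rightarrow> bool" where
  "C5c cnt \<longleftrightarrow> (\<forall>x y. univalent x \<longrightarrow> cnt (y * x) \<le> cnt y)"
definition C5d :: "('a::stone_relation_algebra \<Rightarrow> enat) \<Rightarrow> bool" where
  "C5d cnt \<longleftrightarrow> (\<forall>x y. univalent x \<longrightarrow> cnt (inf x (y * top)) \<le> cnt y)"
definition C5e :: "('a::stone_relation_algebra \<Rightarrow> enat) \<Rightarrow> bool" where
  "C5e cnt \<longleftrightarrow> (\<forall>x y. univalent x \<longrightarrow> cnt (inf x (y * conv y)) \<le> cnt y)"
definition C6a :: "('a::stone_relation_algebra \<Rightarrow> enat) \<Rightarrow> bool" where
  "C6a cnt \<longleftrightarrow> (\<forall>x. cnt (inf 1 (x * conv x)) \<le> cnt x)"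
definition C6b :: "('a::stone_relation_algebra \<Rightarrow> enat) \<Rightarrow> bool" where
  "C6b cnt \<longleftrightarrow> (\<forall>x. cnt (inf 1 (conv x * x)) \<le> cnt x)"
definition C7a :: "('a::stone_relation_algebra \<Rightarrow> enat) \<Rightarrow> bool" where
  "C7a cnt \<longleftrightarrow> (\<forall>x. cnt x = cnt top \<longleftrightarrow> x = top)"
definition C7b :: "('a::stone_relation_algebra \<Rightarrow> enat) \<Rightarrow> bool" where
  "C7b cnt \<longleftrightarrow> (\<forall>x. cnt top \<le> cnt x \<longleftrightarrow> x = top)"

end

theory Submission
  imports Defs
begin

(* All counting statements reduce to inequalities between the counted elements, mostly obtained
   from the Dedekind law. For univalent x the Dedekind law becomes the identity
   x\<^sup>\<smile>y \<sqinter> z = x\<^sup>\<smile>(y \<sqinter> xz), which together with (C3) turns (C5c) into (C5a). The inequalities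
   x \<sqinter> y\<top> \<le> (1 \<sqinter> y\<top>)x and 1 \<sqinter> y\<top> \<le> 1 \<sqinter> yy\<^sup>\<smile> reduce (C5d) to (C6a) when (C5c) holds, and
   (C5b) is recovered from (C5d) through x \<sqinter> yz\<^sup>\<smile> \<le> (xz \<sqinter> y)\<top>. If y is total then
   x \<le> xyy\<^sup>\<smile>, so (C5b) gives #x \<le> #(xy), while (C5c) gives the converse for univalent y;
   a point is the converse of a mapping, which yields #x = #(1x\<^sup>\<smile>) = #1. The additivity
   statements follow from (C4a) by induction on the finite set, atoms being pairwise disjoint. *)

context stone_relation_algebra
begin

lemma comp_left_isotone: "y \<le> z \<Longrightarrow> x * y \<le> x * z"
  by (metis le_iff_sup sra_mult_sup_right)

lemma comp_right_isotone: "y \<le> z \<Longrightarrow> y * x \<le> z * x"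
  by (metis le_iff_sup sra_mult_sup_left)

lemma conv_isotone: "x \<le> y \<Longrightarrow> conv x \<le> conv y"
  by (metis le_iff_sup sra_conv_sup)

lemma conv_top: "conv top = top"
  by (metis conv_isotone sra_conv_invol top.extremum top.extremum_uniqueI)

lemma conv_one: "conv 1 = 1"
  by (metis mult_1_left mult_1_right sra_conv_invol sra_conv_mult)

lemma conv_inf: "conv (inf x y) = inf (conv x) (conv y)"
proof (rule order.antisym)
  show "conv (inf x y) \<le> inf (conv x) (conv y)"
    by (simp add: conv_isotone)
  have "conv (inf (conv x) (conv y)) \<le> inf x y"
    by (metis conv_isotone inf_le1 inf_le2 le_inf_iff sra_conv_invol)
  then show "inf (conv x) (conv y) \<le> conv (inf x y)"
    by (metis conv_isotone sra_conv_invol)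
qed

lemma dedekind_2: "inf (x * y) z \<le> inf x (z * conv y) * y"
proof -
  have "conv (inf (x * y) z) \<le> conv y * inf (conv x) (y * conv z)"
    by (metis conv_inf sra_conv_invol sra_conv_mult sra_dedekind)
  then have "inf (x * y) z \<le> conv (conv y * inf (conv x) (y * conv z))"
    by (metis conv_isotone sra_conv_invol)
  then show ?thesis
    by (simp add: sra_conv_invol sra_conv_mult conv_inf)
qed

lemma inf_comp_top_le_domain_comp: "inf x (y * top) \<le> inf 1 (y * top) * x"
proof -
  have "inf (1 * x) (y * top) \<le> inf 1 (y * top * conv x) * x"
    by (rule dedekind_2)
  moreover have "inf 1 (y * top * conv x) \<le> inf 1 (y * top)"
    by (simp add: le_infI2 comp_left_isotone mult.assoc)
  ultimately show ?thesis
    by (metis comp_right_isotone mult_1_left order_trans)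
qed

lemma one_inf_comp_top_le: "inf 1 (y * top) \<le> inf 1 (y * conv y)"
  using sra_dedekind[of y top 1] by (simp add: inf_commute)

lemma inf_comp_conv_le_inf_comp_top: "inf x (y * conv z) \<le> inf (x * z) y * top"
proof -
  have "inf (y * conv z) x \<le> inf y (x * z) * conv z"
    using dedekind_2[of y "conv z" x] by (simp add: sra_conv_invol)
  also have "\<dots> \<le> inf (x * z) y * top"
    by (simp add: comp_left_isotone inf_commute)
  finally show ?thesis
    by (simp add: inf_commute)
qed

lemma inf_Sup_fin_bot:
  assumes "finite F" "F \<noteq> {}" "\<forall>y\<in>F. inf x y = bot"
  shows "inf x (Sup_fin F) = bot"
  using assms by (induction F rule: finite_ne_induct) (simp_all add: inf_sup_distrib1)

end

lemma univalent_one: "univalent (1::'a::stone_relation_algebra)"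
  by (simp add: univalent_def conv_one)

lemma univalent_conv_comp_inf:
  fixes x :: "'a::stone_relation_algebra"
  assumes "univalent x"
  shows "inf (conv x * y) z = conv x * inf y (x * z)"
proof (rule order.antisym)
  show "inf (conv x * y) z \<le> conv x * inf y (x * z)"
    using sra_dedekind[of "conv x" y z] by (simp add: sra_conv_invol)
  have "conv x * (x * z) \<le> z"
    using comp_right_isotone[of "conv x * x" 1 z] assms
    by (simp add: univalent_def mult.assoc)
  then show "conv x * inf y (x * z) \<le> inf (conv x * y) z"
    by (meson comp_left_isotone inf_le1 inf_le2 le_inf_iff order_trans)
qed

lemma total_comp_conv_increasing:
  fixes y :: "'a::stone_relation_algebra"
  assumes "total y"
  shows "x \<le> x * y * conv y"
  using comp_left_isotone[of 1 "y * conv y" x] assms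
  by (simp add: total_def mult.assoc)

lemma point_conv_mapping: "point (x::'a::stone_relation_algebra) \<Longrightarrow> mapping (conv x)"
  by (simp add: point_def mapping_def univalent_def total_def injective_def surjective_def
      sra_conv_invol)

lemma atoms_disjoint:
  fixes x :: "'a::stone_relation_algebra"
  assumes "atom x" "atom y" "x \<noteq> y"
  shows "inf x y = bot"
proof (rule ccontr)
  assume "inf x y \<noteq> bot"
  then have "inf x y = x" "inf x y = y"
    using assms(1,2) unfolding atom_def by simp_all
  then show False
    using assms(3) by simp
qed

lemma C1b_imp_C1a:
  fixes cnt :: "'a::stone_relation_algebra \<Rightarrow> enat"
  assumes "C1b cnt"
  shows "C1a cnt"
  using assms by (simp add: C1b_def C1a_def)

lemma C3_C5c_imp_C5a:
  fixes cnt :: "'a::stone_relation_algebra \<Rightarrow> enat"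
  assumes "C3 cnt" "C5c cnt"
  shows "C5a cnt"
  unfolding C5a_def
proof (intro allI impI)
  fix x y z :: 'a
  assume "univalent x"
  have "cnt (inf (conv x * y) z) = cnt (conv x * inf y (x * z))"
    using univalent_conv_comp_inf[OF \<open>univalent x\<close>] by simp
  also have "\<dots> = cnt (conv (conv x * inf y (x * z)))"
    using \<open>C3 cnt\<close> by (simp add: C3_def)
  also have "\<dots> = cnt (conv (inf y (x * z)) * x)"
    by (simp add: sra_conv_mult sra_conv_invol)
  also have "\<dots> \<le> cnt (conv (inf y (x * z)))"
    using \<open>C5c cnt\<close> \<open>univalent x\<close> by (simp add: C5c_def)
  also have "\<dots> = cnt (inf (x * z) y)"
    using \<open>C3 cnt\<close> by (simp add: C3_def inf_commute)
  finally show "cnt (inf (conv x * y) z) \<le> cnt (inf (x * z) y)" .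
qed

lemma C5b_imp_C6a:
  fixes cnt :: "'a::stone_relation_algebra \<Rightarrow> enat"
  assumes "C5b cnt"
  shows "C6a cnt"
  unfolding C6a_def
proof
  fix x :: 'a
  show "cnt (inf 1 (x * conv x)) \<le> cnt x"
    using assms univalent_one unfolding C5b_def by (metis inf.idem mult_1_left)
qed

lemma C5e_imp_C6a:
  fixes cnt :: "'a::stone_relation_algebra \<Rightarrow> enat"
  assumes "C5e cnt"
  shows "C6a cnt"
  using assms univalent_one unfolding C5e_def C6a_def by blast

lemma C3_imp_C6a_iff_C6b:
  fixes cnt :: "'a::stone_relation_algebra \<Rightarrow> enat"
  assumes "C3 cnt"
  shows "C6a cnt \<longleftrightarrow> C6b cnt"
proof -
  have "cnt (inf 1 (conv x * x)) \<le> cnt x \<longleftrightarrow> cnt (inf 1 (conv x * conv (conv x))) \<le> cnt (conv x)"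
    for x :: 'a
    using assms by (simp add: C3_def sra_conv_invol)
  then show ?thesis
    unfolding C6a_def C6b_def by (metis sra_conv_invol)
qed

lemma C5a_imp_C5c:
  fixes cnt :: "'a::stone_relation_algebra \<Rightarrow> enat"
  assumes "C3 cnt" "C4b cnt" "C5a cnt"
  shows "C5c cnt"
  unfolding C5c_def
proof (intro allI impI)
  fix x y :: 'a
  assume "univalent x"
  have "cnt (y * x) = cnt (inf (conv x * conv y) top)"
    using \<open>C3 cnt\<close> by (metis C3_def inf_top_right sra_conv_mult)
  also have "\<dots> \<le> cnt (inf (x * top) (conv y))"
    using \<open>C5a cnt\<close> \<open>univalent x\<close> unfolding C5a_def by blast
  also have "\<dots> \<le> cnt (conv y)"
    using \<open>C4b cnt\<close> unfolding C4b_def by simp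
  also have "\<dots> = cnt y"
    using \<open>C3 cnt\<close> unfolding C3_def by simp
  finally show "cnt (y * x) \<le> cnt y" .
qed

lemma C5b_imp_C5d:
  fixes cnt :: "'a::stone_relation_algebra \<Rightarrow> enat"
  assumes "C4b cnt" "C5b cnt"
  shows "C5d cnt"
  unfolding C5d_def
proof (intro allI impI)
  fix x y :: 'a
  assume "univalent x"
  then have "cnt (inf x (y * conv top)) \<le> cnt (inf (x * top) y)"
    using \<open>C5b cnt\<close> unfolding C5b_def by blast
  also have "\<dots> \<le> cnt y"
    using \<open>C4b cnt\<close> unfolding C4b_def by simp
  finally show "cnt (inf x (y * top)) \<le> cnt y"
    by (simp add: conv_top)
qed

lemma C5d_imp_C5b:
  fixes cnt :: "'a::stone_relation_algebra \<Rightarrow> enat"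
  assumes "C4b cnt" "C5d cnt"
  shows "C5b cnt"
  unfolding C5b_def
proof (intro allI impI)
  fix x y z :: 'a
  assume "univalent x"
  have "inf x (y * conv z) \<le> inf x (inf (x * z) y * top)"
    using inf_comp_conv_le_inf_comp_top[of x y z] by simp
  then have "cnt (inf x (y * conv z)) \<le> cnt (inf x (inf (x * z) y * top))"
    using \<open>C4b cnt\<close> unfolding C4b_def by blast
  also have "\<dots> \<le> cnt (inf (x * z) y)"
    using \<open>C5d cnt\<close> \<open>univalent x\<close> unfolding C5d_def by blast
  finally show "cnt (inf x (y * conv z)) \<le> cnt (inf (x * z) y)" .
qed

lemma C5d_imp_C5e:
  fixes cnt :: "'a::stone_relation_algebra \<Rightarrow> enat"
  assumes "C4b cnt" "C5d cnt"
  shows "C5e cnt"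
  unfolding C5e_def
proof (intro allI impI)
  fix x y :: 'a
  assume "univalent x"
  have "cnt (inf x (y * conv y)) \<le> cnt (inf x (y * top))"
    using \<open>C4b cnt\<close> unfolding C4b_def by (simp add: le_infI2 comp_left_isotone)
  also have "\<dots> \<le> cnt y"
    using \<open>C5d cnt\<close> \<open>univalent x\<close> unfolding C5d_def by blast
  finally show "cnt (inf x (y * conv y)) \<le> cnt y" .
qed

lemma C6a_imp_C5d:
  fixes cnt :: "'a::stone_relation_algebra \<Rightarrow> enat"
  assumes "C4b cnt" "C5c cnt" "C6a cnt"
  shows "C5d cnt"
  unfolding C5d_def
proof (intro allI impI)
  fix x y :: 'a
  assume "univalent x"
  have "cnt (inf x (y * top)) \<le> cnt (inf 1 (y * top) * x)"
    using \<open>C4b cnt\<close> inf_comp_top_le_domain_comp unfolding C4b_def by blast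
  also have "\<dots> \<le> cnt (inf 1 (y * top))"
    using \<open>C5c cnt\<close> \<open>univalent x\<close> unfolding C5c_def by blast
  also have "\<dots> \<le> cnt (inf 1 (y * conv y))"
    using \<open>C4b cnt\<close> one_inf_comp_top_le unfolding C4b_def by blast
  also have "\<dots> \<le> cnt y"
    using \<open>C6a cnt\<close> unfolding C6a_def by blast
  finally show "cnt (inf x (y * top)) \<le> cnt y" .
qed

lemma C4b_imp_cnt_le_cnt_top:
  fixes cnt :: "'a::stone_relation_algebra \<Rightarrow> enat"
  assumes "C4b cnt"
  shows "cnt x \<le> cnt top"
  using assms by (simp add: C4b_def)

lemma C4b_imp_C7a_iff_C7b:
  fixes cnt :: "'a::stone_relation_algebra \<Rightarrow> enat"
  assumes "C4b cnt"
  shows "C7a cnt \<longleftrightarrow> C7b cnt"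
  using C4b_imp_cnt_le_cnt_top[OF assms] unfolding C7a_def C7b_def by (metis order.antisym order.refl)

lemma cnt_univalent_comp_mapping:
  fixes cnt :: "'a::stone_relation_algebra \<Rightarrow> enat"
  assumes "C5b cnt" "C5c cnt" "univalent x" "mapping y"
  shows "cnt (x * y) = cnt x"
proof (rule order.antisym)
  show "cnt (x * y) \<le> cnt x"
    using \<open>C5c cnt\<close> \<open>mapping y\<close> unfolding C5c_def mapping_def by blast
  have "x \<le> x * y * conv y"
    using \<open>mapping y\<close> total_comp_conv_increasing unfolding mapping_def by blast
  then have "cnt x = cnt (inf x (x * y * conv y))"
    by (simp add: inf_absorb1)
  also have "\<dots> \<le> cnt (inf (x * y) (x * y))"
    using \<open>C5b cnt\<close> \<open>univalent x\<close> unfolding C5b_def by blast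
  finally show "cnt x \<le> cnt (x * y)"
    by simp
qed

lemma cnt_point:
  fixes cnt :: "'a::stone_relation_algebra \<Rightarrow> enat"
  assumes "C3 cnt" "C5b cnt" "C5c cnt" "point x"
  shows "cnt x = cnt 1"
proof -
  have "cnt (1 * conv x) = cnt 1"
    using assms point_conv_mapping univalent_one by (blast intro: cnt_univalent_comp_mapping)
  then show ?thesis
    using \<open>C3 cnt\<close> unfolding C3_def by simp
qed

lemma cnt_sup_disjoint:
  fixes cnt :: "'a::stone_relation_algebra \<Rightarrow> enat"
  assumes "C1a cnt" "C4a cnt" "inf x y = bot"
  shows "cnt (sup x y) = cnt x + cnt y"
  using assms unfolding C1a_def C4a_def by (metis add.right_neutral)

lemma cnt_Sup_fin_disjoint:
  fixes cnt :: "'a::stone_relation_algebra \<Rightarrow> enat"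
  assumes "C1a cnt" "C4a cnt"
    and "finite X" "X \<noteq> {}" "\<forall>x\<in>X. \<forall>y\<in>X. x \<noteq> y \<longrightarrow> inf x y = bot"
  shows "cnt (Sup_fin X) = (\<Sum>x\<in>X. cnt x)"
  using assms(3-)
proof (induction X rule: finite_ne_induct)
  case (singleton x)
  then show ?case
    by simp
next
  case (insert x F)
  then have "inf x (Sup_fin F) = bot"
    by (intro inf_Sup_fin_bot) auto
  then have "cnt (sup x (Sup_fin F)) = cnt x + cnt (Sup_fin F)"
    by (rule cnt_sup_disjoint[OF assms(1,2)])
  with insert show ?case
    by simp
qed

lemma cnt_Sup_fin_atoms:
  fixes cnt :: "'a::stone_relation_algebra \<Rightarrow> enat"
  assumes "C1a cnt" "C4a cnt" "finite X" "X \<noteq> {}" "\<forall>x\<in>X. atom x"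
  shows "cnt (Sup_fin X) = (\<Sum>x\<in>X. cnt x)"
  using assms atoms_disjoint by (intro cnt_Sup_fin_disjoint) auto

theorem mainTheorem3:
  fixes cnt :: "'a::stone_relation_algebra \<Rightarrow> enat"
  shows
   "(C1b cnt \<longrightarrow> C1a cnt)
  \<and> (C3 cnt \<and> C5c cnt \<longrightarrow> C5a cnt)
  \<and> (C5b cnt \<longrightarrow> C6a cnt) \<and> (C5e cnt \<longrightarrow> C6a cnt)
  \<and> (C3 cnt \<longrightarrow> (C6a cnt \<longleftrightarrow> C6b cnt))
  \<and> (C3 cnt \<and> C4b cnt \<longrightarrow> (C5a cnt \<longleftrightarrow> C5c cnt))
  \<and> (C4b cnt \<longrightarrow> (C5b cnt \<longleftrightarrow> C5d cnt) \<and> (C5d cnt \<longrightarrow> C5e cnt))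
  \<and> (C4b cnt \<and> C5c cnt \<longrightarrow>
       (C5b cnt \<longleftrightarrow> C5d cnt) \<and> (C5b cnt \<longleftrightarrow> C5e cnt) \<and> (C5b cnt \<longleftrightarrow> C6a cnt)
     \<and> (C5d cnt \<longleftrightarrow> C5e cnt) \<and> (C5d cnt \<longleftrightarrow> C6a cnt) \<and> (C5e cnt \<longleftrightarrow> C6a cnt))
  \<and> (C4b cnt \<longrightarrow> (\<forall>x. cnt x \<le> cnt top) \<and> (C7a cnt \<longleftrightarrow> C7b cnt))
  \<and> (C5b cnt \<and> C5c cnt \<longrightarrow> (\<forall>x y. univalent x \<and> mapping y \<longrightarrow> cnt (x * y) = cnt x))
  \<and> (C3 cnt \<and> C5b cnt \<and> C5c cnt \<longrightarrow> (\<forall>x. point x \<longrightarrow> cnt x = cnt 1))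
  \<and> (C1a cnt \<and> C4a cnt \<longrightarrow> (\<forall>x y. inf x y = bot \<longrightarrow> cnt (sup x y) = cnt x + cnt y))
  \<and> (C1a cnt \<and> C4a cnt \<longrightarrow> (\<forall>X. finite X \<and> X \<noteq> {}
        \<and> (\<forall>x\<in>X. \<forall>y\<in>X. x \<noteq> y \<longrightarrow> inf x y = bot)
        \<longrightarrow> cnt (Sup_fin X) = (\<Sum>x\<in>X. cnt x)))
  \<and> (C1a cnt \<and> C4a cnt \<longrightarrow> (\<forall>X. finite X \<and> X \<noteq> {} \<and> (\<forall>x\<in>X. atom x)
        \<longrightarrow> cnt (Sup_fin X) = (\<Sum>x\<in>X. cnt x)))"
proof -
  have C5_equivalences: "(C5b cnt \<longleftrightarrow> C5d cnt) \<and> (C5d cnt \<longleftrightarrow> C5e cnt) \<and> (C5e cnt \<longleftrightarrow> C6a cnt)"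
    if "C4b cnt" "C5c cnt"
    using that C5b_imp_C5d C5d_imp_C5b C5d_imp_C5e C5e_imp_C6a C6a_imp_C5d by blast
  show ?thesis
    by (intro conjI impI allI; (elim conjE)?;
        meson C1b_imp_C1a C3_C5c_imp_C5a C5b_imp_C6a C5e_imp_C6a C3_imp_C6a_iff_C6b
          C5a_imp_C5c C5b_imp_C5d C5d_imp_C5b C5d_imp_C5e C5_equivalences
          C4b_imp_cnt_le_cnt_top C4b_imp_C7a_iff_C7b cnt_univalent_comp_mapping cnt_point
          cnt_sup_disjoint cnt_Sup_fin_disjoint cnt_Sup_fin_atoms)
qed

end
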